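(* Let $K=\mathbb{Q}(\beta)$ be a totally real number field of degree $4$ with $\beta\in\mathcal{O}_K$. Then $\operatorname{disc} K\le \frac{2^{12}}{5^5}\,\lceil\!\overline{\beta}\!\rceil^{12}$, where $\lceil\!\overline{\beta}\!\rceil$ denotes the house of $\beta$.
   Context: $\mathcal{O}_K$ is the ring of integers of $K$. The house of $\beta\in K$ is $\max_i|\sigma_i(\beta)|$, the maximum over the real embeddings $\sigma_i:K\hookrightarrow\mathbb{R}$. $\operatorname{disc}K$ is the discriminant of $K$. *)

theory Defs
  imports Complex_Main "HOL-Computational_Algebra.Polynomial_Factorial"
    "Jordan_Normal_Form.Determinant"
begin

definition rpoly :: "rat poly \<Rightarrow> real \<Rightarrow> real" where
  "rpoly q x = poly (map_poly of_rat q) x"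

definition cpoly :: "rat poly \<Rightarrow> complex \<Rightarrow> complex" where
  "cpoly q z = poly (map_poly of_rat q) z"

definition alg_int :: "real \<Rightarrow> bool" where
  "alg_int x \<longleftrightarrow> (\<exists>p :: int poly. lead_coeff p = 1 \<and> poly (map_poly of_int p) x = 0)"

definition min_poly :: "real \<Rightarrow> rat poly" where
  "min_poly \<beta> = (SOME m. lead_coeff m = 1 \<and> irreducible m \<and> rpoly m \<beta> = 0)"

definition Qadj :: "real \<Rightarrow> real set" where
  "Qadj \<beta> = {rpoly q \<beta> | q. True}"

definition ring_of_integers :: "real \<Rightarrow> real set" where
  "ring_of_integers \<beta> = {x \<in> Qadj \<beta>. alg_int x}"

definition conjs :: "real \<Rightarrow> complex set" where
  "conjs \<beta> = {z. cpoly (min_poly \<beta>) z = 0}"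

(* the embedding K \<rightarrow> C sending beta to the conjugate z *)
definition embed :: "real \<Rightarrow> complex \<Rightarrow> real \<Rightarrow> complex" where
  "embed \<beta> z x = cpoly (SOME q. x = rpoly q \<beta>) z"

definition totally_real :: "real \<Rightarrow> bool" where
  "totally_real \<beta> \<longleftrightarrow> conjs \<beta> \<subseteq> \<real>"

definition trace :: "real \<Rightarrow> real \<Rightarrow> complex" where
  "trace \<beta> x = (\<Sum>z\<in>conjs \<beta>. embed \<beta> z x)"

definition integral_basis :: "real \<Rightarrow> (nat \<Rightarrow> real) \<Rightarrow> bool" where
  "integral_basis \<beta> \<omega> \<longleftrightarrow>
     (let n = degree (min_poly \<beta>) in
       (\<forall>i<n. \<omega> i \<in> ring_of_integers \<beta>) \<and>
       (\<forall>x\<in>ring_of_integers \<beta>. \<exists>c :: nat \<Rightarrow> int. x = (\<Sum>i<n. of_int (c i) * \<omega> i)) \<and>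
       (\<forall>c :: nat \<Rightarrow> int. (\<Sum>i<n. of_int (c i) * \<omega> i) = 0 \<longrightarrow> (\<forall>i<n. c i = 0)))"

(* disc K = det (Tr(w_i w_j)) for an integral basis w (independent of the choice) *)
definition field_disc :: "real \<Rightarrow> real" where
  "field_disc \<beta> =
     (let n = degree (min_poly \<beta>); \<omega> = (SOME \<omega>. integral_basis \<beta> \<omega>) in
       Re (det (mat n n (\<lambda>(i, j). trace \<beta> (\<omega> i * \<omega> j)))))"

definition house :: "real \<Rightarrow> real" where
  "house \<beta> = Max (cmod ` conjs \<beta>)"

end

(*
  Let r 0, ..., r 3 be the conjugates of beta, all real, and V = (r k ^ j) their Vandermonde
  matrix. Traces of elements of O_K are rational, because V conjugates the rational matrix of
  multiplication by x in the power basis to the diagonal matrix of the embeddings of x, and they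
  are algebraic integers, hence integers. Cramer's rule for the Gram matrix V^T V of the trace form
  then puts O_K inside (1/d) Z[beta], which yields an integral basis omega in triangular form.
  As every beta ^ j lies in the Z-span of omega, V is the embedding matrix of omega times a
  nonsingular integer matrix, so disc K <= det V ^ 2 = prod_{i<j} (r j - r i) ^ 2.
  For four points a <= b <= c <= d in [-h, h] write u = b - a, v = c - a, s = d - a <= 2 h: the
  product is s^2 (u v (v - u) (s - u) (s - v))^2, and a one-variable inequality bounds the second
  factor by s^10 / 5^5, giving at most 2^12 / 5^5 h^12.
*)
theory Submission
  imports Defs "Jordan_Normal_Form.Char_Poly" "HOL-Computational_Algebra.Field_as_Ring"
begin

section \<open>Rational polynomials evaluated at real numbers\<close>

interpretation of_rat_poly_hom: map_poly_inj_idom_divide_hom "of_rat :: rat \<Rightarrow> 'a :: field_char_0" ..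

lemma rpoly_add [simp]: "rpoly (p + q) x = rpoly p x + rpoly q x"
  by (simp add: rpoly_def of_rat_poly_hom.hom_add)

lemma rpoly_diff [simp]: "rpoly (p - q) x = rpoly p x - rpoly q x"
  by (simp add: rpoly_def of_rat_poly_hom.hom_minus)

lemma rpoly_mult [simp]: "rpoly (p * q) x = rpoly p x * rpoly q x"
  by (simp add: rpoly_def of_rat_poly_hom.hom_mult)

lemma rpoly_power [simp]: "rpoly (p ^ n) x = rpoly p x ^ n"
  by (simp add: rpoly_def of_rat_poly_hom.hom_power)

lemma rpoly_const [simp]: "rpoly [:c:] x = of_rat c"
  by (simp add: rpoly_def of_rat_hom.map_poly_pCons_hom)

lemma rpoly_0 [simp]: "rpoly 0 x = 0"
  by (simp add: rpoly_def)

lemma rpoly_X [simp]: "rpoly [:0, 1:] x = x"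
  by (simp add: rpoly_def)

lemma rpoly_smult [simp]: "rpoly (smult c p) x = of_rat c * rpoly p x"
  by (simp add: rpoly_def of_rat_hom.map_poly_hom_smult)

lemma rpoly_eq_if_dvd_diff:
  assumes "m dvd q - p" and "rpoly m x = 0"
  shows "rpoly q x = rpoly p x"
proof -
  obtain k where "q - p = m * k" using assms(1) by (rule dvdE)
  then have "rpoly (q - p) x = 0" using assms(2) by simp
  then show ?thesis by simp
qed

lemma rpoly_altdef: "degree q < n \<Longrightarrow> rpoly q x = (\<Sum>j<n. of_rat (coeff q j) * x ^ j)"
  unfolding rpoly_def by (simp add: poly_altdef degree_map_poly)
    (intro sum.mono_neutral_left; auto simp: coeff_eq_0)

lemma of_real_of_rat: "of_real (of_rat r) = (of_rat r :: 'a :: real_field)"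
  by (cases r) (simp add: of_rat_rat of_real_divide)

lemma cpoly_of_real: "cpoly q (complex_of_real x) = complex_of_real (rpoly q x)"
proof -
  have "map_poly (of_rat :: rat \<Rightarrow> complex) q = map_poly of_real (map_poly of_rat q)"
    by (simp add: map_poly_map_poly comp_def of_real_of_rat)
  then show ?thesis
    unfolding cpoly_def rpoly_def by (simp add: of_real_hom.poly_map_poly)
qed

lemma alg_int_imp_rpoly_root:
  assumes "alg_int x"
  obtains q where "q \<noteq> 0" and "rpoly q x = 0"
proof -
  obtain p :: "int poly" where p: "lead_coeff p = 1" "poly (map_poly of_int p) x = 0"
    using assms unfolding alg_int_def by auto
  have "rpoly (map_poly of_int p) x = 0"
    using p(2) by (simp add: rpoly_def map_poly_map_poly comp_def)
  moreover have "map_poly (of_int :: int \<Rightarrow> rat) p \<noteq> 0"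
    using p(1) by auto
  ultimately show ?thesis by (rule that[rotated])
qed

lemma min_poly_spec:
  assumes "q \<noteq> 0" and "rpoly q x = 0"
  shows "lead_coeff (min_poly x) = 1 \<and> irreducible (min_poly x) \<and> rpoly (min_poly x) x = 0"
proof -
  define n where "n = (LEAST n. \<exists>q. q \<noteq> 0 \<and> rpoly q x = 0 \<and> degree q = n)"
  have "\<exists>q. q \<noteq> 0 \<and> rpoly q x = 0 \<and> degree q = n"
    unfolding n_def by (rule LeastI_ex) (use assms in auto)
  then obtain q0 where q0: "q0 \<noteq> 0" "rpoly q0 x = 0" "degree q0 = n"
    by blast
  have minimal: "n \<le> degree p" if "p \<noteq> 0" "rpoly p x = 0" for p
    unfolding n_def using that by (auto intro: Least_le)
  define m where "m = smult (inverse (lead_coeff q0)) q0"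
  have m: "m \<noteq> 0" "lead_coeff m = 1" "rpoly m x = 0" "degree m = n"
    using q0 unfolding m_def by auto
  have "irreducible m"
  proof (rule irreducibleI)
    show "\<not> is_unit m"
      using m by (auto simp: is_unit_iff_degree elim!: degree_eq_zeroE)
    fix a c assume mac: "m = a * c"
    then have "a \<noteq> 0" "c \<noteq> 0" and deg: "degree a + degree c = n"
      using m by (auto simp: degree_mult_eq)
    moreover have "rpoly a x = 0 \<or> rpoly c x = 0"
      using m(3) mac by simp
    ultimately show "is_unit a \<or> is_unit c"
      using minimal[of a] minimal[of c] by (auto simp: is_unit_iff_degree)
  qed (use m in simp)
  with m have "\<exists>m. lead_coeff m = 1 \<and> irreducible m \<and> rpoly m x = 0" by blast
  from someI_ex[OF this] show ?thesis unfolding min_poly_def .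
qed

lemma coprime_no_common_root:
  fixes p q :: "rat poly" and z :: "'a :: field_char_0"
  assumes "coprime p q" and "poly (map_poly of_rat p) z = 0"
  shows "poly (map_poly of_rat q) z \<noteq> 0"
proof
  assume "poly (map_poly of_rat q) z = 0"
  moreover have "fst (bezout_coefficients p q) * p + snd (bezout_coefficients p q) * q = 1"
    using assms(1) bezout_coefficients_fst_snd[of p q] by simp
  then have "poly (map_poly of_rat (fst (bezout_coefficients p q) * p
      + snd (bezout_coefficients p q) * q)) z = (1 :: 'a)"
    by simp
  ultimately show False
    using assms(2) by (simp add: of_rat_poly_hom.hom_add of_rat_poly_hom.hom_mult)
qed

lemma irreducible_root_dvd:
  assumes "irreducible m" and "rpoly m x = 0" and "rpoly q x = 0"
  shows "m dvd q"
proof (rule ccontr)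
  assume "\<not> m dvd q"
  with assms(1) have "coprime m q"
    by (intro prime_elem_imp_coprime) (simp add: prime_elem_iff_irreducible)
  with assms(2,3) show False
    using coprime_no_common_root[of m q x] by (simp add: rpoly_def)
qed

lemma irreducible_rsquarefree:
  assumes "irreducible (m :: rat poly)"
  shows "rsquarefree (map_poly (of_rat :: rat \<Rightarrow> 'a :: field_char_0) m)"
proof -
  have "m \<noteq> 0" "\<not> is_unit m"
    using assms by auto
  then have "degree m \<noteq> 0"
    by (simp add: is_unit_iff_degree)
  then have "pderiv m \<noteq> 0" and "degree (pderiv m) < degree m"
    by (auto simp: pderiv_eq_0_iff degree_pderiv)
  then have "\<not> m dvd pderiv m"
    using dvd_imp_degree_le by fastforce
  with assms have "coprime m (pderiv m)"
    by (intro prime_elem_imp_coprime) (simp add: prime_elem_iff_irreducible)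
  then show ?thesis
    unfolding rsquarefree_roots
    using coprime_no_common_root[of m "pderiv m"] by (auto simp: of_rat_hom.map_poly_pderiv)
qed

section \<open>Algebraic integers\<close>

lemma alg_int_iff_algebraic_int: "alg_int x \<longleftrightarrow> algebraic_int x"
  unfolding alg_int_def algebraic_int_altdef_ipoly by blast

definition int_span :: "'a :: comm_ring_1 set \<Rightarrow> 'a set" where
  "int_span G = {x. \<exists>c :: 'a \<Rightarrow> int. x = (\<Sum>g\<in>G. of_int (c g) * g)}"

lemma int_span_add:
  assumes "x \<in> int_span G" and "y \<in> int_span G"
  shows "x + y \<in> int_span G"
proof -
  obtain c d where "x = (\<Sum>g\<in>G. of_int (c g) * g)" "y = (\<Sum>g\<in>G. of_int (d g) * g)"
    using assms unfolding int_span_def by auto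
  then have "x + y = (\<Sum>g\<in>G. of_int (c g + d g) * g)"
    by (simp add: sum.distrib algebra_simps)
  then show ?thesis unfolding int_span_def by (auto intro!: exI[of _ "\<lambda>g. c g + d g"])
qed

lemma int_span_mult_of_int:
  assumes "x \<in> int_span G"
  shows "of_int a * x \<in> int_span G"
proof -
  obtain c where "x = (\<Sum>g\<in>G. of_int (c g) * g)"
    using assms unfolding int_span_def by auto
  then have "of_int a * x = (\<Sum>g\<in>G. of_int (a * c g) * g)"
    by (simp add: sum_distrib_left algebra_simps)
  then show ?thesis unfolding int_span_def by (auto intro!: exI[of _ "\<lambda>g. a * c g"])
qed

lemma int_span_sum:
  "(\<And>i. i \<in> I \<Longrightarrow> f i \<in> int_span G) \<Longrightarrow> (\<Sum>i\<in>I. f i) \<in> int_span G"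
proof (induction I rule: infinite_finite_induct)
  case (infinite I)
  then show ?case unfolding int_span_def by (auto intro!: exI[of _ "\<lambda>_. 0"])
next
  case empty
  then show ?case unfolding int_span_def by (auto intro!: exI[of _ "\<lambda>_. 0"])
qed (auto intro: int_span_add)

lemma int_span_base:
  assumes "finite G" and "g \<in> G"
  shows "g \<in> int_span G"
proof -
  have "(\<Sum>h\<in>G. of_int (if h = g then 1 else 0) * h) = (\<Sum>h\<in>G. if h = g then h else 0)"
    by (rule sum.cong) auto
  also have "\<dots> = g"
    using assms by (simp add: sum.delta)
  finally show ?thesis
    unfolding int_span_def by (auto intro!: exI[of _ "\<lambda>h. if h = g then 1 else 0"])
qed

lemma int_span_mult:
  assumes "finite A" "finite B" "x \<in> int_span A" "y \<in> int_span B"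
  shows "x * y \<in> int_span ((\<lambda>(a, b). a * b) ` (A \<times> B))"
proof -
  obtain c d where "x = (\<Sum>a\<in>A. of_int (c a) * a)" "y = (\<Sum>b\<in>B. of_int (d b) * b)"
    using assms(3,4) unfolding int_span_def by auto
  then have "x * y = (\<Sum>a\<in>A. \<Sum>b\<in>B. of_int (c a * d b) * (a * b))"
    by (simp add: sum_product algebra_simps)
  also have "\<dots> \<in> int_span ((\<lambda>(a, b). a * b) ` (A \<times> B))"
    using assms(1,2) by (intro int_span_sum int_span_mult_of_int int_span_base) auto
  finally show ?thesis .
qed

text \<open>\<open>y\<close> is an eigenvalue of the integer matrix of multiplication by \<open>y\<close> on the generators,
  hence a root of its monic characteristic polynomial.\<close>

lemma algebraic_int_if_int_span_stable:
  fixes y :: "'a :: field_char_0"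
  assumes "finite G" and "g0 \<in> G" "g0 \<noteq> 0" and stable: "\<And>g. g \<in> G \<Longrightarrow> y * g \<in> int_span G"
  shows "algebraic_int y"
proof -
  obtain gs where gs: "set gs = G" "distinct gs"
    using finite_distinct_list[OF assms(1)] by blast
  define N where "N = length gs"
  have sum_G: "(\<Sum>g\<in>G. f g) = (\<Sum>j<N. f (gs ! j))" for f :: "'a \<Rightarrow> 'a"
    unfolding gs(1)[symmetric] N_def sum.distinct_set_conv_list[OF gs(2)]
    by (simp add: sum_list_sum_nth lessThan_atLeast0)
  have "\<forall>i<N. \<exists>c. y * gs ! i = (\<Sum>g\<in>G. of_int (c g) * g)"
    using stable gs(1) unfolding N_def int_span_def by auto
  then obtain c where c: "\<And>i. i < N \<Longrightarrow> y * gs ! i = (\<Sum>g\<in>G. of_int (c i g) * g)"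
    by metis
  define A :: "int mat" where "A = mat N N (\<lambda>(i, j). c i (gs ! j))"
  define v :: "'a vec" where "v = vec N (\<lambda>j. gs ! j)"
  have A: "A \<in> carrier_mat N N" unfolding A_def by simp
  have "eigenvector (map_mat of_int A) v y"
    unfolding eigenvector_def
  proof (intro conjI)
    show "v \<in> carrier_vec (dim_row (map_mat of_int A))"
      unfolding v_def A_def by simp
    obtain j where "j < N" "gs ! j = g0"
      using assms(2) gs(1) unfolding N_def by (metis in_set_conv_nth)
    then show "v \<noteq> 0\<^sub>v (dim_row (map_mat of_int A))"
      using assms(3) unfolding v_def A_def by (auto simp: vec_eq_iff)
    show "map_mat of_int A *\<^sub>v v = y \<cdot>\<^sub>v v"
      using c sum_G unfolding A_def v_def
      by (auto intro!: eq_vecI simp: scalar_prod_def lessThan_atLeast0)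
  qed
  then have "poly (char_poly (map_mat of_int A)) y = 0"
    using eigenvalue_root_char_poly[of "map_mat of_int A" N] A unfolding eigenvalue_def by auto
  then have "poly (of_int_poly (char_poly A)) y = 0"
    by (simp add: of_int_hom.char_poly_hom[OF A])
  moreover have "lead_coeff (char_poly A) = 1"
    using degree_monic_char_poly[OF A] by simp
  ultimately show ?thesis
    unfolding algebraic_int_altdef_ipoly by blast
qed

lemma int_span_powers_stable:
  fixes x :: "'a :: field_char_0"
  assumes "lead_coeff p = 1" and "poly (of_int_poly p) x = 0"
  defines "G \<equiv> (\<lambda>i. x ^ i) ` {..<degree p}"
  shows "1 \<in> G" and "\<And>g. g \<in> G \<Longrightarrow> x * g \<in> int_span G"
proof -
  have "degree p \<noteq> 0"
  proof
    assume "degree p = 0"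
    then have "p = 1"
      using assms(1) by (metis degree_eq_zeroE lead_coeff_pCons(2) one_pCons pCons_0_0)
    then show False
      using assms(2) by simp
  qed
  then show "1 \<in> G"
    unfolding G_def by (auto intro!: image_eqI[of _ _ 0])
  have "0 = (\<Sum>i\<le>degree p. of_int (coeff p i) * x ^ i)"
    using assms(2) by (simp add: poly_altdef degree_map_poly)
  also have "\<dots> = (\<Sum>i<degree p. of_int (coeff p i) * x ^ i) + x ^ degree p"
    using assms(1) by (simp add: lessThan_Suc_atMost[symmetric])
  finally have "x ^ degree p = (\<Sum>i<degree p. of_int (- coeff p i) * x ^ i)"
    by (simp add: sum_negf eq_neg_iff_add_eq_0 add.commute)
  also have "\<dots> \<in> int_span G"
    unfolding G_def by (intro int_span_sum int_span_mult_of_int int_span_base) auto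
  finally have top: "x ^ degree p \<in> int_span G" .
  fix g assume "g \<in> G"
  then obtain i where i: "i < degree p" "g = x ^ i"
    unfolding G_def by auto
  show "x * g \<in> int_span G"
  proof (cases "Suc i < degree p")
    case True
    then show ?thesis
      using i unfolding G_def by (auto intro!: int_span_base image_eqI[of _ _ "Suc i"])
  next
    case False
    then have "Suc i = degree p"
      using i by simp
    then show ?thesis
      using i top by (metis power_Suc)
  qed
qed

lemma algebraic_int_add_mult:
  fixes x y :: "'a :: field_char_0"
  assumes "algebraic_int x" and "algebraic_int y"
  shows "algebraic_int (x + y)" and "algebraic_int (x * y)"
proof -
  obtain p q where p: "lead_coeff p = 1" "poly (of_int_poly p) x = 0"
    and q: "lead_coeff q = 1" "poly (of_int_poly q) y = 0"
    using assms unfolding algebraic_int_altdef_ipoly by blast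
  define Gx where "Gx = (\<lambda>i. x ^ i) ` {..<degree p}"
  define Gy where "Gy = (\<lambda>i. y ^ i) ` {..<degree q}"
  define G where "G = (\<lambda>(a, b). a * b) ` (Gx \<times> Gy)"
  note x_stable = int_span_powers_stable[OF p, folded Gx_def]
  note y_stable = int_span_powers_stable[OF q, folded Gy_def]
  have fin: "finite Gx" "finite Gy" "finite G"
    unfolding Gx_def Gy_def G_def by auto
  have one: "1 \<in> G"
    unfolding G_def using x_stable(1) y_stable(1) by force
  have span: "a \<in> int_span Gx" "b \<in> int_span Gy" if "a \<in> Gx" "b \<in> Gy" for a b
    using that fin by (auto intro: int_span_base)
  show "algebraic_int (x + y)"
  proof (rule algebraic_int_if_int_span_stable[OF fin(3) one])
    fix g assume "g \<in> G"
    then obtain a b where ab: "a \<in> Gx" "b \<in> Gy" "g = a * b"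
      unfolding G_def by auto
    have "(x + y) * g = (x * a) * b + a * (y * b)"
      using ab by (simp add: algebra_simps)
    also have "\<dots> \<in> int_span G"
      unfolding G_def using ab fin x_stable(2) y_stable(2) span
      by (intro int_span_add int_span_mult) auto
    finally show "(x + y) * g \<in> int_span G" .
  qed simp
  show "algebraic_int (x * y)"
  proof (rule algebraic_int_if_int_span_stable[OF fin(3) one])
    fix g assume "g \<in> G"
    then obtain a b where ab: "a \<in> Gx" "b \<in> Gy" "g = a * b"
      unfolding G_def by auto
    have "(x * y) * g = (x * a) * (y * b)"
      using ab by (simp add: algebra_simps)
    also have "\<dots> \<in> int_span G"
      unfolding G_def using ab fin x_stable(2) y_stable(2)
      by (intro int_span_mult) auto
    finally show "(x * y) * g \<in> int_span G" .
  qed simp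
qed

lemma algebraic_int_sum:
  fixes f :: "'b \<Rightarrow> 'a :: field_char_0"
  shows "(\<And>i. i \<in> I \<Longrightarrow> algebraic_int (f i)) \<Longrightarrow> algebraic_int (\<Sum>i\<in>I. f i)"
  by (induction I rule: infinite_finite_induct) (auto intro: algebraic_int_add_mult)

section \<open>Traces, adjugates and Vandermonde determinants\<close>

definition mat_trace :: "'a :: comm_ring_1 mat \<Rightarrow> 'a" where
  "mat_trace A = (\<Sum>i<dim_row A. A $$ (i, i))"

lemma mat_trace_mult_comm:
  assumes "A \<in> carrier_mat n m" and "B \<in> carrier_mat m n"
  shows "mat_trace (A * B) = mat_trace (B * A)"
proof -
  have "mat_trace (A * B) = (\<Sum>i<n. \<Sum>j<m. A $$ (i, j) * B $$ (j, i))"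
    using assms by (simp add: mat_trace_def scalar_prod_def lessThan_atLeast0)
  also have "\<dots> = (\<Sum>j<m. \<Sum>i<n. B $$ (j, i) * A $$ (i, j))"
    by (subst sum.swap) (simp add: mult.commute)
  also have "\<dots> = mat_trace (B * A)"
    using assms by (simp add: mat_trace_def scalar_prod_def lessThan_atLeast0)
  finally show ?thesis .
qed

lemma mat_trace_smult_one_mult:
  "A \<in> carrier_mat n n \<Longrightarrow> mat_trace (c \<cdot>\<^sub>m 1\<^sub>m n * A) = c * mat_trace A"
  by (simp add: mat_trace_def mult_smult_assoc_mat sum_distrib_left)

text \<open>Multiplying by the adjugate of \<open>V\<close> instead of its inverse, an integral domain suffices.\<close>

lemma mat_trace_eq_if_intertwined:
  fixes V A D :: "'a :: idom mat"
  assumes V: "V \<in> carrier_mat n n" and "det V \<noteq> 0"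
    and A: "A \<in> carrier_mat n n" and D: "D \<in> carrier_mat n n" and VA: "V * A = D * V"
  shows "mat_trace A = mat_trace D"
proof -
  note adj = adj_mat[OF V]
  have reassoc: "adj_mat V * V * A = (adj_mat V * D) * V"
    using A D V adj(1) by (simp add: VA)
  have "det V * mat_trace A = mat_trace (adj_mat V * V * A)"
    using A adj(3) by (simp add: mat_trace_smult_one_mult)
  also have "\<dots> = mat_trace ((adj_mat V * D) * V)"
    unfolding reassoc ..
  also have "\<dots> = mat_trace (V * (adj_mat V * D))"
    using D V adj by (intro mat_trace_mult_comm) auto
  also have "\<dots> = det V * mat_trace D"
    using D V adj(1) by (simp add: assoc_mult_mat[symmetric, of V n n "adj_mat V" n D n]
        adj(2) mat_trace_smult_one_mult)
  finally show ?thesis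
    using assms(2) by simp
qed

lemma det_vandermonde_nonzero:
  fixes x :: "nat \<Rightarrow> 'a :: idom"
  assumes "inj_on x {..<n}"
  shows "det (mat n n (\<lambda>(k, j). x k ^ j)) \<noteq> 0"
proof
  let ?V = "mat n n (\<lambda>(k, j). x k ^ j)"
  assume "det ?V = 0"
  then obtain v where v: "v \<in> carrier_vec n" "v \<noteq> 0\<^sub>v n" "?V *\<^sub>v v = 0\<^sub>v n"
    using det_0_iff_vec_prod_zero[of ?V n] by auto
  define p where "p = (\<Sum>j<n. monom (v $ j) j)"
  have coeff_p: "coeff p j = (if j < n then v $ j else 0)" for j
    unfolding p_def by (simp add: coeff_sum coeff_monom sum.delta' cong: if_cong)
  obtain j where j: "j < n" "v $ j \<noteq> 0"
    using v(1,2) by (auto simp: vec_eq_iff)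
  then have "p \<noteq> 0" and "degree p < n"
    using coeff_p by (auto intro: le_less_trans[OF degree_le[of "n - 1"]] simp: poly_eq_iff)
  have "x k \<in> {z. poly p z = 0}" if "k < n" for k
  proof -
    have "poly p (x k) = (\<Sum>j<n. v $ j * x k ^ j)"
      unfolding p_def by (simp add: poly_sum poly_monom)
    also have "\<dots> = (?V *\<^sub>v v) $ k"
      using that v(1) by (simp add: scalar_prod_def lessThan_atLeast0 mult.commute)
    finally show ?thesis
      using that v(3) by simp
  qed
  then have "card (x ` {..<n}) \<le> card {z. poly p z = 0}"
    using poly_roots_finite[OF \<open>p \<noteq> 0\<close>] by (intro card_mono) auto
  also have "\<dots> \<le> degree p"
    by (rule card_poly_roots_bound[OF \<open>p \<noteq> 0\<close>])
  finally show False
    using \<open>degree p < n\<close> card_image[OF assms] by simp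
qed

lemma of_int_det_mult_in_Ints:
  fixes A :: "int mat" and c :: "'a :: comm_ring_1 vec"
  assumes A: "A \<in> carrier_mat n n" and c: "c \<in> carrier_vec n" and t: "t \<in> carrier_vec n"
    and Ac: "map_mat of_int A *\<^sub>v c = map_vec of_int t" and j: "j < n"
  shows "of_int (det A) * c $ j \<in> \<int>"
proof -
  note adj = adj_mat[OF A]
  have "map_mat of_int (adj_mat A * A) = of_int (det A) \<cdot>\<^sub>m (1\<^sub>m n :: 'a mat)"
    unfolding adj(3) by (auto intro!: eq_matI)
  then have "of_int (det A) \<cdot>\<^sub>v c = map_mat of_int (adj_mat A * A) *\<^sub>v c"
    using c by (auto intro!: eq_vecI simp: row_smult scalar_prod_left_unit)
  also have "\<dots> = map_mat of_int (adj_mat A) *\<^sub>v (map_mat of_int A *\<^sub>v c)"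
    using A adj(1) c by (simp add: of_int_hom.mat_hom_mult)
  also have "\<dots> = map_vec of_int (adj_mat A *\<^sub>v t)"
    unfolding Ac using adj(1) t by (simp add: of_int_hom.mult_mat_vec_hom)
  finally have "of_int (det A) * c $ j = of_int ((adj_mat A *\<^sub>v t) $ j)"
    using j c adj(1) by (metis (no_types) carrier_matD(1) carrier_vecD dim_mult_mat_vec
        index_map_vec(1) index_smult_vec(1))
  then show ?thesis by simp
qed

lemma det_2x2:
  assumes "A \<in> carrier_mat 2 2"
  shows "det A = A $$ (0, 0) * A $$ (1, 1) - A $$ (0, 1) * A $$ (1, 0)"
proof -
  have "det A = (\<Sum>i<2. A $$ (i, 0) * cofactor A i 0)"
    by (rule laplace_expansion_column[OF assms]) simp
  also have "\<dots> = A $$ (0, 0) * A $$ (1, 1) - A $$ (0, 1) * A $$ (1, 0)"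
    using assms by (simp add: eval_nat_numeral lessThan_Suc cofactor_def mat_delete_def det_single)
  finally show ?thesis .
qed

lemma det_3x3:
  assumes A: "A \<in> carrier_mat 3 3"
  shows "det A = A $$ (0, 0) * (A $$ (1, 1) * A $$ (2, 2) - A $$ (1, 2) * A $$ (2, 1))
    - A $$ (1, 0) * (A $$ (0, 1) * A $$ (2, 2) - A $$ (0, 2) * A $$ (2, 1))
    + A $$ (2, 0) * (A $$ (0, 1) * A $$ (1, 2) - A $$ (0, 2) * A $$ (1, 1))"
proof -
  have minor: "mat_delete A i j \<in> carrier_mat 2 2" for i j
    using mat_delete_carrier[OF A] by simp
  have "det A = (\<Sum>i<3. A $$ (i, 0) * cofactor A i 0)"
    by (rule laplace_expansion_column[OF A]) simp
  also have "\<dots> = A $$ (0, 0) * (A $$ (1, 1) * A $$ (2, 2) - A $$ (1, 2) * A $$ (2, 1))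
    - A $$ (1, 0) * (A $$ (0, 1) * A $$ (2, 2) - A $$ (0, 2) * A $$ (2, 1))
    + A $$ (2, 0) * (A $$ (0, 1) * A $$ (1, 2) - A $$ (0, 2) * A $$ (1, 1))"
    unfolding cofactor_def det_2x2[OF minor] using A
    by (simp add: eval_nat_numeral lessThan_Suc mat_delete_def algebra_simps)
  finally show ?thesis .
qed

lemma det_vandermonde4:
  "det (mat 4 4 (\<lambda>(k, j). (x k :: 'a :: comm_ring_1) ^ j)) =
     (x 1 - x 0) * (x 2 - x 0) * (x 3 - x 0) * (x 2 - x 1) * (x 3 - x 1) * (x 3 - x 2)"
proof -
  let ?V = "mat 4 4 (\<lambda>(k, j). x k ^ j)"
  have minor: "mat_delete ?V i 0 \<in> carrier_mat 3 3" for i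
    using mat_delete_carrier[of ?V 4 4] by simp
  have "det ?V = (\<Sum>i<4. ?V $$ (i, 0) * cofactor ?V i 0)"
    by (rule laplace_expansion_column) auto
  also have "\<dots> = (x 1 - x 0) * (x 2 - x 0) * (x 3 - x 0) * (x 2 - x 1) * (x 3 - x 1) * (x 3 - x 2)"
    unfolding cofactor_def det_3x3[OF minor]
    by (simp add: eval_nat_numeral lessThan_Suc mat_delete_def algebra_simps)
  finally show ?thesis .
qed

section \<open>Totally real fields\<close>

lemma totally_real_min_poly_splits:
  assumes "q \<noteq> 0" and "rpoly q \<beta> = 0" and "totally_real \<beta>"
  defines "n \<equiv> degree (min_poly \<beta>)"
  obtains r where "inj_on r {..<n}" and "conjs \<beta> = (\<lambda>k. complex_of_real (r k)) ` {..<n}"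
    and "\<And>x. rpoly (min_poly \<beta>) x = (\<Prod>k<n. x - r k)"
proof -
  define mc where "mc = map_poly (of_rat :: rat \<Rightarrow> complex) (min_poly \<beta>)"
  have "lead_coeff (min_poly \<beta>) = 1" and "irreducible (min_poly \<beta>)"
    using min_poly_spec[OF assms(1,2)] by auto
  then have mc: "mc \<noteq> 0" "lead_coeff mc = 1" "degree mc = n" "rsquarefree mc"
    unfolding mc_def n_def by (auto intro: irreducible_rsquarefree)
  obtain as where as: "mc = (\<Prod>a\<leftarrow>as. [:- a, 1:])" "length as = n"
    using fundamental_theorem_algebra_factorized[of mc] mc by auto
  have roots: "{z. poly mc z = 0} = set as"
    unfolding as poly_prod_list prod_list_zero_iff by auto
  then have "distinct as"
    using rsquarefree_card_degree[OF mc(1)] mc(3,4) as(2) by (simp add: card_distinct)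
  have conjs: "conjs \<beta> = set as"
    unfolding conjs_def cpoly_def roots[unfolded mc_def, symmetric] ..
  define r where "r k = Re (as ! k)" for k
  have as_r: "as ! k = complex_of_real (r k)" if "k < n" for k
  proof -
    have "as ! k \<in> \<real>"
      using that assms(3) as(2) conjs unfolding totally_real_def by auto
    then show ?thesis unfolding r_def by (auto elim: Reals_cases)
  qed
  show ?thesis
  proof
    show "inj_on r {..<n}"
    proof (rule inj_onI)
      fix i j assume "i \<in> {..<n}" "j \<in> {..<n}" "r i = r j"
      then have "as ! i = as ! j" and "i < length as" "j < length as"
        using as(2) as_r by auto
      then show "i = j"
        using \<open>distinct as\<close> by (simp add: nth_eq_iff_index_eq)
    qed
    have "set as = (\<lambda>k. as ! k) ` {..<n}"
      using as(2) by (auto simp: set_conv_nth)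
    also have "\<dots> = (\<lambda>k. complex_of_real (r k)) ` {..<n}"
      by (rule image_cong) (simp_all add: as_r)
    finally show "conjs \<beta> = (\<lambda>k. complex_of_real (r k)) ` {..<n}"
      unfolding conjs .
    fix x
    have "complex_of_real (rpoly (min_poly \<beta>) x) = poly mc (complex_of_real x)"
      unfolding mc_def cpoly_of_real[symmetric] cpoly_def ..
    also have "\<dots> = (\<Prod>k<n. complex_of_real x - as ! k)"
      unfolding as(1) prod.list_conv_set_nth by (simp add: as(2) lessThan_atLeast0 poly_prod)
    also have "\<dots> = complex_of_real (\<Prod>k<n. x - r k)"
      by (simp add: as_r)
    finally show "rpoly (min_poly \<beta>) x = (\<Prod>k<n. x - r k)"
      by (simp only: of_real_eq_iff)
  qed
qed

lemma Qadj_iff: "x \<in> Qadj \<beta> \<longleftrightarrow> (\<exists>q. x = rpoly q \<beta>)"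
  unfolding Qadj_def by auto

lemma Qadj_add: "x \<in> Qadj \<beta> \<Longrightarrow> y \<in> Qadj \<beta> \<Longrightarrow> x + y \<in> Qadj \<beta>"
  unfolding Qadj_iff by (metis rpoly_add)

lemma Qadj_mult: "x \<in> Qadj \<beta> \<Longrightarrow> y \<in> Qadj \<beta> \<Longrightarrow> x * y \<in> Qadj \<beta>"
  unfolding Qadj_iff by (metis rpoly_mult)

lemma Qadj_of_int: "of_int c \<in> Qadj \<beta>"
  unfolding Qadj_iff by (metis rpoly_const of_rat_of_int_eq)

lemma Qadj_power: "\<beta> ^ i \<in> Qadj \<beta>"
  unfolding Qadj_iff by (metis rpoly_X rpoly_power)

lemma Qadj_sum: "(\<And>i. i \<in> I \<Longrightarrow> f i \<in> Qadj \<beta>) \<Longrightarrow> sum f I \<in> Qadj \<beta>"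
  by (induction I rule: infinite_finite_induct) (auto intro: Qadj_add Qadj_of_int[of 0, simplified])

lemma ring_of_integers_iff: "x \<in> ring_of_integers \<beta> \<longleftrightarrow> x \<in> Qadj \<beta> \<and> algebraic_int x"
  unfolding ring_of_integers_def alg_int_iff_algebraic_int by simp

lemma ring_of_integers_add:
  "x \<in> ring_of_integers \<beta> \<Longrightarrow> y \<in> ring_of_integers \<beta> \<Longrightarrow> x + y \<in> ring_of_integers \<beta>"
  unfolding ring_of_integers_iff by (auto intro: Qadj_add algebraic_int_add_mult)

lemma ring_of_integers_mult:
  "x \<in> ring_of_integers \<beta> \<Longrightarrow> y \<in> ring_of_integers \<beta> \<Longrightarrow> x * y \<in> ring_of_integers \<beta>"
  unfolding ring_of_integers_iff by (auto intro: Qadj_mult algebraic_int_add_mult)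

lemma ring_of_integers_of_int: "of_int c \<in> ring_of_integers \<beta>"
  unfolding ring_of_integers_iff by (auto intro: Qadj_of_int)

lemma ring_of_integers_diff:
  "x \<in> ring_of_integers \<beta> \<Longrightarrow> y \<in> ring_of_integers \<beta> \<Longrightarrow> x - of_int c * y \<in> ring_of_integers \<beta>"
  using ring_of_integers_add[of x \<beta> "of_int (- c) * y"]
    ring_of_integers_mult[OF ring_of_integers_of_int, of y \<beta> "- c"]
  by simp

lemma ring_of_integers_power: "alg_int \<beta> \<Longrightarrow> \<beta> ^ i \<in> ring_of_integers \<beta>"
proof (induction i)
  case 0
  then show ?case using ring_of_integers_of_int[of 1] by simp
next
  case (Suc i)
  moreover have "\<beta> \<in> ring_of_integers \<beta>"
    using Suc.prems Qadj_power[of \<beta> 1] unfolding ring_of_integers_def by simp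
  ultimately show ?case by (simp add: ring_of_integers_mult)
qed

locale totally_real_field =
  fixes \<beta> :: real and n :: nat and r :: "nat \<Rightarrow> real"
  assumes alg_int: "alg_int \<beta>"
    and degree_min_poly: "degree (min_poly \<beta>) = n"
    and roots_inj: "inj_on r {..<n}"
    and conjs_eq: "conjs \<beta> = (\<lambda>k. complex_of_real (r k)) ` {..<n}"
    and min_poly_eq: "\<And>x. rpoly (min_poly \<beta>) x = (\<Prod>k<n. x - r k)"
begin

lemma min_poly_props:
  "lead_coeff (min_poly \<beta>) = 1" "irreducible (min_poly \<beta>)" "rpoly (min_poly \<beta>) \<beta> = 0"
  using alg_int by (auto elim: alg_int_imp_rpoly_root dest: min_poly_spec)

lemma min_poly_root: "k < n \<Longrightarrow> rpoly (min_poly \<beta>) (r k) = 0"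
  unfolding min_poly_eq by (rule prod_zero) auto

lemma rpoly_root_cong:
  assumes "k < n" and "rpoly p \<beta> = rpoly q \<beta>"
  shows "rpoly p (r k) = rpoly q (r k)"
proof (rule rpoly_eq_if_dvd_diff)
  show "min_poly \<beta> dvd p - q"
    using assms(2) min_poly_props(2,3) by (intro irreducible_root_dvd) auto
qed (use assms(1) min_poly_root in blast)

definition \<sigma> :: "nat \<Rightarrow> real \<Rightarrow> real" where
  "\<sigma> k x = rpoly (SOME q. x = rpoly q \<beta>) (r k)"

lemma \<sigma>_rpoly: "k < n \<Longrightarrow> \<sigma> k (rpoly q \<beta>) = rpoly q (r k)"
  unfolding \<sigma>_def by (rule rpoly_root_cong) (auto intro: someI2)

lemma embed_eq: "embed \<beta> (complex_of_real (r k)) x = complex_of_real (\<sigma> k x)"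
  unfolding embed_def \<sigma>_def cpoly_of_real ..

lemma \<sigma>_add: "k < n \<Longrightarrow> x \<in> Qadj \<beta> \<Longrightarrow> y \<in> Qadj \<beta> \<Longrightarrow> \<sigma> k (x + y) = \<sigma> k x + \<sigma> k y"
  unfolding Qadj_iff by (metis rpoly_add \<sigma>_rpoly)

lemma \<sigma>_mult: "k < n \<Longrightarrow> x \<in> Qadj \<beta> \<Longrightarrow> y \<in> Qadj \<beta> \<Longrightarrow> \<sigma> k (x * y) = \<sigma> k x * \<sigma> k y"
  unfolding Qadj_iff by (metis rpoly_mult \<sigma>_rpoly)

lemma \<sigma>_of_int: "k < n \<Longrightarrow> \<sigma> k (of_int c) = of_int c"
  using \<sigma>_rpoly[of k "[:of_int c:]"] by simp

lemma \<sigma>_power: "k < n \<Longrightarrow> \<sigma> k (\<beta> ^ l) = r k ^ l"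
  using \<sigma>_rpoly[of k "[:0, 1:] ^ l"] by simp

lemma \<sigma>_sum:
  assumes "k < n" and "\<And>i. i \<in> I \<Longrightarrow> f i \<in> Qadj \<beta>"
  shows "\<sigma> k (\<Sum>i\<in>I. f i) = (\<Sum>i\<in>I. \<sigma> k (f i))"
  using assms(2)
proof (induction I rule: infinite_finite_induct)
  case (insert i I)
  then show ?case
    using assms(1) by (simp add: \<sigma>_add Qadj_sum)
qed (use assms(1) \<sigma>_of_int[of k 0] in simp_all)

lemma \<sigma>_algebraic_int:
  assumes k: "k < n" and x: "x \<in> ring_of_integers \<beta>"
  shows "algebraic_int (\<sigma> k x)"
proof -
  obtain q where q: "x = rpoly q \<beta>"
    using x unfolding ring_of_integers_def Qadj_iff by auto
  obtain p :: "int poly" where p: "lead_coeff p = 1" "poly (of_int_poly p) x = 0"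
    using x unfolding ring_of_integers_iff algebraic_int_altdef_ipoly by auto
  have p_q: "rpoly (pcompose (of_int_poly p) q) t = poly (of_int_poly p) (rpoly q t)" for t
    unfolding rpoly_def of_rat_hom.map_poly_pcompose poly_pcompose
    by (simp add: map_poly_map_poly comp_def)
  have "rpoly (pcompose (of_int_poly p) q) (r k) = rpoly 0 (r k)"
    using p(2) q by (intro rpoly_root_cong[OF k]) (simp add: p_q)
  then have "poly (of_int_poly p) (\<sigma> k x) = 0"
    using p_q \<sigma>_rpoly[OF k] q by simp
  with p(1) show ?thesis
    unfolding algebraic_int_altdef_ipoly by blast
qed

definition tr :: "real \<Rightarrow> real" where
  "tr x = (\<Sum>k<n. \<sigma> k x)"

lemma trace_eq: "trace \<beta> x = complex_of_real (tr x)"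
proof -
  have "inj_on (\<lambda>k. complex_of_real (r k)) {..<n}"
    using roots_inj by (auto simp: inj_on_def)
  then show ?thesis
    unfolding trace_def conjs_eq tr_def by (simp add: sum.reindex embed_eq)
qed

lemma n_pos: "0 < n"
proof (rule ccontr)
  assume "\<not> 0 < n"
  then have "min_poly \<beta> = 1"
    using min_poly_props(1) degree_min_poly
    by (metis degree_eq_zeroE lead_coeff_pCons(2) one_pCons pCons_0_0 gr0I)
  then show False
    using min_poly_props(3) by (simp add: rpoly_def)
qed

text \<open>The coordinates of \<open>x \<in> \<rat>(\<beta>)\<close> in the power basis \<open>1, \<beta>, \<dots>, \<beta>\<^sup>n\<^sup>-\<^sup>1\<close>
  are the coefficients of \<open>rep x\<close>.\<close>

definition rep :: "real \<Rightarrow> rat poly" where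
  "rep x = (SOME q. x = rpoly q \<beta>) mod min_poly \<beta>"

lemma rep_rpoly: "rep (rpoly q \<beta>) = q mod min_poly \<beta>"
proof -
  let ?q = "SOME p. rpoly q \<beta> = rpoly p \<beta>"
  have "rpoly ?q \<beta> = rpoly q \<beta>"
    by (rule someI2[of _ q]) auto
  then have "min_poly \<beta> dvd ?q - q"
    using min_poly_props(2,3) by (intro irreducible_root_dvd) auto
  then show ?thesis
    unfolding rep_def by (simp add: mod_eq_dvd_iff)
qed

lemma degree_rep: "degree (rep x) < n"
proof (cases "rep x = 0")
  case False
  have "min_poly \<beta> \<noteq> 0"
    using min_poly_props(1) by auto
  then show ?thesis
    using degree_mod_less[of "min_poly \<beta>"] False degree_min_poly unfolding rep_def by blast
qed (simp add: n_pos)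

lemma rpoly_rep: "x \<in> Qadj \<beta> \<Longrightarrow> rpoly (rep x) \<beta> = x"
  unfolding Qadj_iff using min_poly_props(3)
  by (auto simp: rep_rpoly intro!: rpoly_eq_if_dvd_diff[of "min_poly \<beta>"] simp flip: mod_eq_dvd_iff)

lemma \<sigma>_rep: "k < n \<Longrightarrow> x \<in> Qadj \<beta> \<Longrightarrow> \<sigma> k x = rpoly (rep x) (r k)"
  using \<sigma>_rpoly[of k "rep x"] rpoly_rep by simp

lemma rep_add: "x \<in> Qadj \<beta> \<Longrightarrow> y \<in> Qadj \<beta> \<Longrightarrow> rep (x + y) = rep x + rep y"
  unfolding Qadj_iff by (auto simp: rep_rpoly poly_mod_add_left simp flip: rpoly_add)

lemma rep_mult_of_int: "x \<in> Qadj \<beta> \<Longrightarrow> rep (of_int c * x) = smult (of_int c) (rep x)"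
  unfolding Qadj_iff using rep_rpoly[of "smult (of_int c) _"] by (auto simp: rep_rpoly mod_smult_left)

lemma rep_0: "rep 0 = 0"
  using rep_rpoly[of 0] by simp

lemma rep_power: "i < n \<Longrightarrow> rep (\<beta> ^ i) = monom 1 i"
  using rep_rpoly[of "[:0, 1:] ^ i"] degree_min_poly
  by (simp add: mod_poly_less degree_power_eq monom_altdef)

lemma rep_eq_0: "x \<in> Qadj \<beta> \<Longrightarrow> rep x = 0 \<Longrightarrow> x = 0"
  using rpoly_rep by fastforce

lemma power_basis_expansion:
  "x \<in> Qadj \<beta> \<Longrightarrow> rpoly (rep x) t = (\<Sum>j<n. of_rat (coeff (rep x) j) * t ^ j)"
  using rpoly_altdef[OF degree_rep] .

lemma rep_diff_mult_of_int:
  assumes "x \<in> Qadj \<beta>" and "y \<in> Qadj \<beta>"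
  shows "rep (x - of_int c * y) = rep x - smult (of_int c) (rep y)"
proof -
  have "rep (x + of_int (- c) * y) = rep x + rep (of_int (- c) * y)"
    using assms by (intro rep_add Qadj_mult Qadj_of_int)
  then show ?thesis
    using rep_mult_of_int[OF assms(2), of "- c"] by simp
qed

lemma rep_sum: "(\<And>i. i \<in> I \<Longrightarrow> f i \<in> Qadj \<beta>) \<Longrightarrow> rep (sum f I) = (\<Sum>i\<in>I. rep (f i))"
  by (induction I rule: infinite_finite_induct) (auto simp: rep_0 rep_add Qadj_sum)

definition V :: "real mat" where
  "V = mat n n (\<lambda>(k, j). r k ^ j)"

lemma V_carrier: "V \<in> carrier_mat n n"
  unfolding V_def by simp

lemma det_V_nonzero: "det V \<noteq> 0"
  unfolding V_def using roots_inj by (rule det_vandermonde_nonzero)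

text \<open>In the power basis, multiplication by \<open>x\<close> has a rational matrix that the Vandermonde
  matrix \<open>V\<close> conjugates to \<open>diag (\<sigma>\<^sub>0 x, \<dots>, \<sigma>\<^sub>n\<^sub>-\<^sub>1 x)\<close>; comparing traces shows that
  \<open>tr x\<close> is rational.\<close>

lemma tr_in_Rats:
  assumes x: "x \<in> Qadj \<beta>"
  shows "tr x \<in> \<rat>"
proof -
  define A :: "real mat" where "A = mat n n (\<lambda>(j, i). of_rat (coeff (rep (x * \<beta> ^ i)) j))"
  define D :: "real mat" where "D = mat n n (\<lambda>(k, l). if k = l then \<sigma> k x else 0)"
  have "V * A = D * V"
  proof (rule eq_matI)
    fix k i assume "k < dim_row (D * V)" "i < dim_col (D * V)"
    then have k: "k < n" and i: "i < n"
      unfolding D_def V_def by auto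
    have "(V * A) $$ (k, i) = (\<Sum>j<n. of_rat (coeff (rep (x * \<beta> ^ i)) j) * r k ^ j)"
      using k i by (simp add: V_def A_def scalar_prod_def lessThan_atLeast0 mult.commute)
    also have "\<dots> = \<sigma> k (x * \<beta> ^ i)"
      using k x by (simp add: \<sigma>_rep power_basis_expansion Qadj_mult Qadj_power)
    also have "\<dots> = (\<Sum>l<n. if k = l then \<sigma> k x * r k ^ i else 0)"
      using k x by (simp add: \<sigma>_mult \<sigma>_power Qadj_power)
    also have "\<dots> = (D * V) $$ (k, i)"
      using k i unfolding D_def V_def
      by (auto simp: scalar_prod_def lessThan_atLeast0 if_distrib[of "\<lambda>a. a * _"] cong: if_cong)
    finally show "(V * A) $$ (k, i) = (D * V) $$ (k, i)" .
  qed (auto simp: V_def A_def D_def)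
  then have "mat_trace A = mat_trace D"
    by (intro mat_trace_eq_if_intertwined[OF V_carrier det_V_nonzero]) (auto simp: A_def D_def)
  moreover have "mat_trace D = tr x"
    unfolding mat_trace_def D_def tr_def by simp
  moreover have "mat_trace A \<in> \<rat>"
    unfolding mat_trace_def A_def by (auto intro: Rats_sum)
  ultimately show ?thesis by simp
qed

lemma tr_algebraic_int: "x \<in> ring_of_integers \<beta> \<Longrightarrow> algebraic_int (tr x)"
  unfolding tr_def by (intro algebraic_int_sum \<sigma>_algebraic_int) auto

lemma tr_in_Ints: "x \<in> ring_of_integers \<beta> \<Longrightarrow> tr x \<in> \<int>"
  using rational_algebraic_int_is_int tr_algebraic_int tr_in_Rats
  unfolding ring_of_integers_def by blast

lemma tr_power: "tr (\<beta> ^ l) = (\<Sum>k<n. r k ^ l)"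
  unfolding tr_def by (simp add: \<sigma>_power)

lemma tr_power_in_Ints: "tr (\<beta> ^ l) \<in> \<int>"
  using tr_in_Ints ring_of_integers_power[OF alg_int] by blast

lemma tr_mult_power:
  assumes "x \<in> Qadj \<beta>"
  shows "tr (x * \<beta> ^ i) = (\<Sum>j<n. tr (\<beta> ^ (i + j)) * of_rat (coeff (rep x) j))"
proof -
  have "\<sigma> k (x * \<beta> ^ i) = (\<Sum>j<n. of_rat (coeff (rep x) j) * r k ^ (i + j))" if "k < n" for k
  proof -
    have "\<sigma> k (x * \<beta> ^ i) = \<sigma> k x * r k ^ i"
      using that assms by (simp add: \<sigma>_mult \<sigma>_power Qadj_power)
    also have "\<sigma> k x = (\<Sum>j<n. of_rat (coeff (rep x) j) * r k ^ j)"
      using that assms by (simp add: \<sigma>_rep power_basis_expansion)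
    finally show ?thesis
      by (simp add: sum_distrib_left power_add mult_ac)
  qed
  then have "tr (x * \<beta> ^ i) = (\<Sum>k<n. \<Sum>j<n. of_rat (coeff (rep x) j) * r k ^ (i + j))"
    unfolding tr_def by simp
  also have "\<dots> = (\<Sum>j<n. tr (\<beta> ^ (i + j)) * of_rat (coeff (rep x) j))"
    by (subst sum.swap) (simp add: tr_power sum_distrib_left sum_distrib_right mult_ac)
  finally show ?thesis .
qed

definition gram :: "int mat" where
  "gram = mat n n (\<lambda>(i, j). \<lfloor>tr (\<beta> ^ (i + j))\<rfloor>)"

lemma gram_carrier: "gram \<in> carrier_mat n n"
  unfolding gram_def by simp

lemma gram_eq: "map_mat of_int gram = transpose_mat V * V"
proof (rule eq_matI)
  fix i j assume "i < dim_row (transpose_mat V * V)" "j < dim_col (transpose_mat V * V)"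
  then have "i < n" "j < n"
    unfolding V_def by auto
  then show "map_mat of_int gram $$ (i, j) = (transpose_mat V * V) $$ (i, j)"
    using tr_power_in_Ints[of "i + j"]
    by (simp add: gram_def V_def tr_power scalar_prod_def lessThan_atLeast0 flip: power_add)
qed (auto simp: gram_def V_def)

lemma det_gram_nonzero: "det gram \<noteq> 0"
proof -
  have "(of_int (det gram) :: real) = det (transpose_mat V) * det V"
    using gram_eq V_carrier by (metis det_mult of_int_hom.hom_det transpose_carrier_mat)
  then show ?thesis
    using det_V_nonzero det_transpose[OF V_carrier] by auto
qed

text \<open>Cramer's rule applied to the linear system \<open>gram \<cdot> coordinates = (tr (x \<beta>\<^sup>i))\<^sub>i\<close>,
  whose right-hand side is integral.\<close>

lemma det_gram_mult_coeff_in_Ints: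
  assumes x: "x \<in> ring_of_integers \<beta>" and j: "j < n"
  shows "of_int (det gram) * coeff (rep x) j \<in> \<int>"
proof -
  have xQ: "x \<in> Qadj \<beta>"
    using x unfolding ring_of_integers_def by simp
  define c :: "real vec" where "c = vec n (\<lambda>j. of_rat (coeff (rep x) j))"
  define t where "t = vec n (\<lambda>i. \<lfloor>tr (x * \<beta> ^ i)\<rfloor>)"
  have "map_mat of_int gram *\<^sub>v c = map_vec of_int t"
  proof (rule eq_vecI)
    fix i assume "i < dim_vec (map_vec of_int t)"
    then have i: "i < n" unfolding t_def by simp
    have "(map_mat of_int gram *\<^sub>v c) $ i = tr (x * \<beta> ^ i)"
      using i tr_power_in_Ints unfolding tr_mult_power[OF xQ]
      by (simp add: gram_def c_def scalar_prod_def lessThan_atLeast0)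
    also have "\<dots> = map_vec of_int t $ i"
      using i tr_in_Ints[OF ring_of_integers_mult[OF x ring_of_integers_power[OF alg_int]]]
      by (simp add: t_def)
    finally show "(map_mat of_int gram *\<^sub>v c) $ i = map_vec of_int t $ i" .
  qed (simp add: gram_def t_def)
  then have "of_int (det gram) * c $ j \<in> \<int>"
    using j by (intro of_int_det_mult_in_Ints[OF gram_carrier]) (auto simp: c_def t_def)
  then obtain z where "of_rat (of_int (det gram) * coeff (rep x) j) = (of_int z :: real)"
    using j by (auto simp: c_def of_rat_mult elim!: Ints_cases)
  then show ?thesis
    by (metis Ints_of_int of_rat_eq_iff of_rat_of_int_eq)
qed

section \<open>An integral basis\<close>

definition scale :: int where
  "scale = \<bar>det gram\<bar>"

lemma scale_pos: "0 < scale"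
  unfolding scale_def using det_gram_nonzero by simp

definition \<nu> :: "real \<Rightarrow> nat \<Rightarrow> int" where
  "\<nu> x j = \<lfloor>of_int scale * coeff (rep x) j\<rfloor>"

lemma of_int_\<nu>:
  assumes "x \<in> ring_of_integers \<beta>" and "j < n"
  shows "of_int (\<nu> x j) = of_int scale * coeff (rep x) j"
proof -
  have "of_int scale * coeff (rep x) j \<in> \<int>"
    using det_gram_mult_coeff_in_Ints[OF assms] unfolding scale_def
    by (cases "0 \<le> det gram") (auto simp flip: minus_mult_left)
  then show ?thesis
    unfolding \<nu>_def by (auto elim: Ints_cases)
qed

lemma \<nu>_diff:
  assumes "x \<in> ring_of_integers \<beta>" "y \<in> ring_of_integers \<beta>" and "j < n"
  shows "\<nu> (x - of_int c * y) j = \<nu> x j - c * \<nu> y j"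
proof -
  have "rep (x - of_int c * y) = rep x - smult (of_int c) (rep y)"
    using assms by (intro rep_diff_mult_of_int) (auto simp: ring_of_integers_def)
  then have "(of_int (\<nu> (x - of_int c * y) j) :: rat)
      = of_int scale * (coeff (rep x) j - of_int c * coeff (rep y) j)"
    using assms by (simp add: of_int_\<nu> ring_of_integers_diff)
  also have "\<dots> = of_int (\<nu> x j - c * \<nu> y j)"
    using assms by (simp add: of_int_\<nu> algebra_simps)
  finally show ?thesis
    by (simp only: of_int_eq_iff)
qed

lemma \<nu>_eq_0_iff: "x \<in> ring_of_integers \<beta> \<Longrightarrow> j < n \<Longrightarrow> \<nu> x j = 0 \<longleftrightarrow> coeff (rep x) j = 0"
  using of_int_\<nu> scale_pos by (metis mult_eq_0_iff of_int_0_eq_iff less_irrefl)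

definition vanishing_below :: "nat \<Rightarrow> real set" where
  "vanishing_below i = {x \<in> ring_of_integers \<beta>. \<forall>j<i. coeff (rep x) j = 0}"

lemma vanishing_below_diff:
  assumes "x \<in> vanishing_below i" and "y \<in> vanishing_below i"
  shows "x - of_int c * y \<in> vanishing_below i"
proof -
  have "x \<in> ring_of_integers \<beta>" "y \<in> ring_of_integers \<beta>"
    using assms unfolding vanishing_below_def by auto
  moreover from this have "x - of_int c * y \<in> ring_of_integers \<beta>"
    by (rule ring_of_integers_diff)
  ultimately show ?thesis
    using assms unfolding vanishing_below_def
    by (auto simp: rep_diff_mult_of_int ring_of_integers_def)
qed

lemma power_in_vanishing_below: "i < n \<Longrightarrow> \<beta> ^ i \<in> vanishing_below i"
  unfolding vanishing_below_def using ring_of_integers_power[OF alg_int] by (simp add: rep_power coeff_monom)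

lemma \<nu>_power: "i < n \<Longrightarrow> \<nu> (\<beta> ^ i) i = scale"
  unfolding \<nu>_def by (simp add: rep_power)

text \<open>The triangular integral basis: \<open>\<omega> i \<in> vanishing_below i\<close> has the least positive
  \<open>i\<close>-th coordinate.\<close>

definition least_\<nu> :: "nat \<Rightarrow> nat" where
  "least_\<nu> i = (LEAST m. 0 < m \<and> (\<exists>x\<in>vanishing_below i. \<nu> x i = int m))"

definition \<omega> :: "nat \<Rightarrow> real" where
  "\<omega> i = (SOME x. x \<in> vanishing_below i \<and> \<nu> x i = int (least_\<nu> i))"

lemma least_\<nu>_spec: "i < n \<Longrightarrow> 0 < least_\<nu> i \<and> (\<exists>x\<in>vanishing_below i. \<nu> x i = int (least_\<nu> i))"
  unfolding least_\<nu>_def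
  by (rule LeastI[of _ "nat scale"]) (use scale_pos power_in_vanishing_below \<nu>_power in auto)

lemma least_\<nu>_le: "x \<in> vanishing_below i \<Longrightarrow> 0 < \<nu> x i \<Longrightarrow> int (least_\<nu> i) \<le> \<nu> x i"
  unfolding least_\<nu>_def by (subst nat_le_eq_zle[symmetric]) (auto intro!: Least_le)

lemma \<omega>_spec: "i < n \<Longrightarrow> \<omega> i \<in> vanishing_below i \<and> \<nu> (\<omega> i) i = int (least_\<nu> i)"
  unfolding \<omega>_def using least_\<nu>_spec by (metis (mono_tags, lifting) someI_ex)

lemma \<omega>_in_ring_of_integers: "i < n \<Longrightarrow> \<omega> i \<in> ring_of_integers \<beta>"
  using \<omega>_spec unfolding vanishing_below_def by auto

text \<open>Division with remainder by \<open>\<omega> i\<close> in the \<open>i\<close>-th coordinate leaves an element of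
  \<open>vanishing_below (Suc i)\<close>.\<close>

lemma vanishing_below_in_span:
  assumes "i \<le> n" and "x \<in> vanishing_below i"
  shows "\<exists>c :: nat \<Rightarrow> int. x = (\<Sum>j\<in>{i..<n}. of_int (c j) * \<omega> j)"
  using assms
proof (induction i arbitrary: x rule: inc_induct)
  case base
  then have "rep x = 0"
    using degree_rep[of x] by (auto simp: vanishing_below_def poly_eq_iff coeff_eq_0)
  then have "x = 0"
    using base rep_eq_0 unfolding vanishing_below_def ring_of_integers_def by blast
  then show ?case by simp
next
  case (step i)
  define q where "q = \<nu> x i div int (least_\<nu> i)"
  define x' where "x' = x - of_int q * \<omega> i"
  have \<omega>i: "\<omega> i \<in> vanishing_below i" "\<nu> (\<omega> i) i = int (least_\<nu> i)" and pos: "0 < least_\<nu> i"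
    using \<omega>_spec least_\<nu>_spec step.hyps(2) by auto
  have x': "x' \<in> vanishing_below i"
    unfolding x'_def using step.prems \<omega>i(1) by (rule vanishing_below_diff)
  have "\<nu> x' i = \<nu> x i - q * int (least_\<nu> i)"
    unfolding x'_def using step.prems \<omega>i step.hyps(2)
    by (simp add: \<nu>_diff vanishing_below_def)
  also have "\<dots> = \<nu> x i mod int (least_\<nu> i)"
    unfolding q_def by (simp add: minus_div_mult_eq_mod)
  finally have "0 \<le> \<nu> x' i" and "\<nu> x' i < int (least_\<nu> i)"
    using pos by simp_all
  then have "\<nu> x' i = 0"
    using least_\<nu>_le[OF x'] by (cases "0 < \<nu> x' i") auto
  then have "x' \<in> vanishing_below (Suc i)"
    using x' step.hyps(2) \<nu>_eq_0_iff unfolding vanishing_below_def by (auto simp: less_Suc_eq)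
  then obtain c where c: "x' = (\<Sum>j\<in>{Suc i..<n}. of_int (c j) * \<omega> j)"
    using step.IH by blast
  have "x = of_int ((c(i := q)) i) * \<omega> i + (\<Sum>j\<in>{Suc i..<n}. of_int ((c(i := q)) j) * \<omega> j)"
    using c unfolding x'_def by simp
  also have "\<dots> = (\<Sum>j\<in>{i..<n}. of_int ((c(i := q)) j) * \<omega> j)"
    using step.hyps(2) by (simp add: sum.atLeast_Suc_lessThan)
  finally show ?case by blast
qed

lemma \<omega>_independent:
  assumes "(\<Sum>j<n. of_int (c j) * \<omega> j) = 0"
  shows "\<forall>j<n. c j = 0"
proof (rule ccontr)
  assume "\<not> (\<forall>j<n. c j = 0)"
  then obtain l where l: "l < n" "c l \<noteq> 0" and below: "\<And>j. j < l \<Longrightarrow> c j = 0"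
    using exists_least_iff[of "\<lambda>j. j < n \<and> c j \<noteq> 0"] by (auto dest: order.strict_trans)
  have coeff_l: "coeff (rep (of_int (c j) * \<omega> j)) l = (if j = l then of_int (c l) * coeff (rep (\<omega> l)) l else 0)"
    if "j < n" for j
  proof -
    have "coeff (rep (\<omega> j)) l = 0" if "l < j"
      using \<omega>_spec \<open>j < n\<close> that unfolding vanishing_below_def by auto
    then show ?thesis
      using \<open>j < n\<close> below \<omega>_in_ring_of_integers
      by (auto simp: rep_mult_of_int ring_of_integers_def linorder_neq_iff)
  qed
  have "0 = coeff (rep (\<Sum>j<n. of_int (c j) * \<omega> j)) l"
    by (simp add: assms rep_0)
  also have "\<dots> = (\<Sum>j<n. coeff (rep (of_int (c j) * \<omega> j)) l)"
    using \<omega>_in_ring_of_integers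
    by (subst rep_sum) (auto simp: coeff_sum Qadj_mult Qadj_of_int ring_of_integers_def)
  also have "\<dots> = of_int (c l) * coeff (rep (\<omega> l)) l"
    using l(1) by (simp add: coeff_l)
  moreover have "coeff (rep (\<omega> l)) l \<noteq> 0"
    using \<omega>_spec[OF l(1)] least_\<nu>_spec[OF l(1)] \<nu>_eq_0_iff[OF \<omega>_in_ring_of_integers[OF l(1)] l(1)] by simp
  ultimately show False
    using l(2) by simp
qed

lemma integral_basis_\<omega>: "integral_basis \<beta> \<omega>"
  unfolding integral_basis_def Let_def degree_min_poly
  using \<omega>_in_ring_of_integers \<omega>_independent vanishing_below_in_span[of 0]
  by (auto simp: vanishing_below_def atLeast0LessThan)

section \<open>The discriminant and the Vandermonde determinant\<close>

definition emb_mat :: "(nat \<Rightarrow> real) \<Rightarrow> real mat" where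
  "emb_mat w = mat n n (\<lambda>(k, i). \<sigma> k (w i))"

lemma emb_mat_carrier: "emb_mat w \<in> carrier_mat n n"
  unfolding emb_mat_def by simp

lemma discriminant_eq_det_emb_mat_sq:
  assumes w: "\<And>i. i < n \<Longrightarrow> w i \<in> Qadj \<beta>"
  shows "Re (det (mat n n (\<lambda>(i, j). trace \<beta> (w i * w j)))) = det (emb_mat w) ^ 2"
proof -
  let ?M = "emb_mat w"
  have "mat n n (\<lambda>(i, j). trace \<beta> (w i * w j)) = map_mat complex_of_real (transpose_mat ?M * ?M)"
  proof (rule eq_matI)
    fix i j assume "i < dim_row (map_mat complex_of_real (transpose_mat ?M * ?M))"
      "j < dim_col (map_mat complex_of_real (transpose_mat ?M * ?M))"
    then have ij: "i < n" "j < n"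
      unfolding emb_mat_def by auto
    have "tr (w i * w j) = (\<Sum>k<n. \<sigma> k (w i) * \<sigma> k (w j))"
      unfolding tr_def using ij w by (intro sum.cong) (auto simp: \<sigma>_mult)
    then show "mat n n (\<lambda>(i, j). trace \<beta> (w i * w j)) $$ (i, j)
        = map_mat complex_of_real (transpose_mat ?M * ?M) $$ (i, j)"
      using ij by (simp add: trace_eq emb_mat_def scalar_prod_def lessThan_atLeast0)
  qed (auto simp: emb_mat_def)
  then have "Re (det (mat n n (\<lambda>(i, j). trace \<beta> (w i * w j)))) = det (transpose_mat ?M * ?M)"
    by (simp add: of_real_hom.hom_det)
  also have "\<dots> = det ?M ^ 2"
    using det_mult[of "transpose_mat ?M" n ?M] emb_mat_carrier det_transpose[OF emb_mat_carrier]
    by (simp add: power2_eq_square)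
  finally show ?thesis .
qed

text \<open>The rows of \<open>C\<close> are the coordinates of \<open>\<beta> ^ j\<close> with respect to the integral basis \<open>w\<close>.\<close>

lemma det_V_eq_det_emb_mat_mult:
  assumes w: "integral_basis \<beta> w"
  obtains C :: "int mat" where "det C \<noteq> 0" and "det V = det (emb_mat w) * of_int (det C)"
proof -
  have w_int: "\<And>i. i < n \<Longrightarrow> w i \<in> ring_of_integers \<beta>"
    and span: "\<And>x. x \<in> ring_of_integers \<beta> \<Longrightarrow> \<exists>c :: nat \<Rightarrow> int. x = (\<Sum>i<n. of_int (c i) * w i)"
    using w unfolding integral_basis_def Let_def degree_min_poly by auto
  have w_Q: "\<And>i. i < n \<Longrightarrow> w i \<in> Qadj \<beta>"
    using w_int unfolding ring_of_integers_def by simp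
  have "\<forall>j. \<exists>c :: nat \<Rightarrow> int. \<beta> ^ j = (\<Sum>i<n. of_int (c i) * w i)"
    using span ring_of_integers_power[OF alg_int] by blast
  then obtain c :: "nat \<Rightarrow> nat \<Rightarrow> int" where c: "\<And>j. \<beta> ^ j = (\<Sum>i<n. of_int (c j i) * w i)"
    by metis
  define C :: "int mat" where "C = mat n n (\<lambda>(j, i). c j i)"
  have C: "transpose_mat (map_mat of_int C) \<in> carrier_mat n n"
    unfolding C_def by simp
  have "V = emb_mat w * transpose_mat (map_mat of_int C)"
  proof (rule eq_matI)
    fix k j assume "k < dim_row (emb_mat w * transpose_mat (map_mat of_int C))"
      "j < dim_col (emb_mat w * transpose_mat (map_mat of_int C))"
    then have kj: "k < n" "j < n"
      unfolding emb_mat_def C_def by auto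
    have "V $$ (k, j) = \<sigma> k (\<Sum>i<n. of_int (c j i) * w i)"
      using kj by (simp add: V_def \<sigma>_power flip: c)
    also have "\<dots> = (\<Sum>i<n. of_int (c j i) * \<sigma> k (w i))"
      using kj w_Q by (subst \<sigma>_sum) (auto simp: \<sigma>_mult \<sigma>_of_int Qadj_mult Qadj_of_int)
    also have "\<dots> = (emb_mat w * transpose_mat (map_mat of_int C)) $$ (k, j)"
      using kj by (simp add: emb_mat_def C_def scalar_prod_def lessThan_atLeast0 mult.commute)
    finally show "V $$ (k, j) = (emb_mat w * transpose_mat (map_mat of_int C)) $$ (k, j)" .
  qed (auto simp: V_def emb_mat_def C_def)
  moreover have "det (transpose_mat (map_mat of_int C)) = (of_int (det C) :: real)"
    using det_transpose[of "map_mat of_int C" n] by (simp add: C_def of_int_hom.hom_det)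
  ultimately have "det V = det (emb_mat w) * of_int (det C)"
    using det_mult[OF emb_mat_carrier C] by simp
  moreover from this have "det C \<noteq> 0"
    using det_V_nonzero by auto
  ultimately show ?thesis
    using that by blast
qed

lemma field_disc_le: "field_disc \<beta> \<le> det V ^ 2"
proof -
  define w where "w = (SOME w. integral_basis \<beta> w)"
  have w: "integral_basis \<beta> w"
    unfolding w_def by (rule someI[of "integral_basis \<beta>", OF integral_basis_\<omega>])
  then have "\<And>i. i < n \<Longrightarrow> w i \<in> Qadj \<beta>"
    unfolding integral_basis_def Let_def degree_min_poly ring_of_integers_def by auto
  then have disc: "field_disc \<beta> = det (emb_mat w) ^ 2"
    unfolding field_disc_def Let_def degree_min_poly w_def[symmetric]
    by (rule discriminant_eq_det_emb_mat_sq)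
  obtain C where C: "det C \<noteq> 0" "det V = det (emb_mat w) * of_int (det C)"
    using det_V_eq_det_emb_mat_mult[OF w] .
  have "1 \<le> \<bar>of_int (det C) :: real\<bar>"
    using C(1) by linarith
  then have "1 \<le> (of_int (det C) :: real) ^ 2"
    using one_le_power[of "\<bar>of_int (det C) :: real\<bar>" 2] by simp
  then show ?thesis
    unfolding disc C(2) power_mult_distrib by (simp add: mult_le_cancel_left1)
qed

lemma abs_root_le_house: "k < n \<Longrightarrow> \<bar>r k\<bar> \<le> house \<beta>"
  unfolding house_def conjs_eq by (intro Max_ge) (auto simp: image_image)

end

section \<open>Four points in an interval\<close>

lemma mult_diff_pow4_le:
  fixes s t :: real
  assumes "0 \<le> t" and "t \<le> s"
  shows "5 ^ 5 * t * (s - t) ^ 4 \<le> 4 ^ 4 * s ^ 5"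
proof -
  have "4 ^ 4 * s ^ 5 - 5 ^ 5 * t * (s - t) ^ 4
      = (5 * t - s)\<^sup>2 * (256 * (s - t) ^ 3 + 203 * t * (s - t)\<^sup>2 + 88 * t\<^sup>2 * (s - t) + 16 * t ^ 3)"
    by (simp add: eval_nat_numeral field_simps)
  also have "\<dots> \<ge> 0"
    using assms by (intro mult_nonneg_nonneg add_nonneg_nonneg) auto
  finally show ?thesis by simp
qed

text \<open>With \<open>C = u + v - s\<close> and \<open>D = v - u\<close> one has
  \<open>16 u (s - u) v (s - v) = (s\<^sup>2 - C\<^sup>2 - D\<^sup>2)\<^sup>2 - 4 C\<^sup>2 D\<^sup>2 \<le> (s\<^sup>2 - D\<^sup>2)\<^sup>2\<close>, which reduces the
  two-variable problem to \<open>mult_diff_pow4_le\<close> in \<open>D\<^sup>2\<close>.\<close>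

lemma gap_product_bound:
  fixes u v s :: real
  assumes "0 \<le> u" and "u \<le> v" and "v \<le> s"
  shows "5 ^ 5 * (u * v * (v - u) * (s - u) * (s - v))\<^sup>2 \<le> s ^ 10"
proof -
  define C where "C = u + v - s"
  define D where "D = v - u"
  define X where "X = u * (s - u) * v * (s - v)"
  have D: "0 \<le> D" "D \<le> s"
    using assms unfolding D_def by auto
  have "C\<^sup>2 \<le> (s - D)\<^sup>2"
    using assms unfolding C_def D_def by (simp add: abs_le_square_iff[symmetric])
  also have "\<dots> \<le> 2 * (s\<^sup>2 - D\<^sup>2)"
    using D mult_left_mono[of "s - D" "2 * (s + D)" "s - D"]
    by (simp add: power2_eq_square algebra_simps)
  finally have "C\<^sup>2 \<le> 2 * (s\<^sup>2 - D\<^sup>2)" .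
  moreover have "D\<^sup>2 \<le> s\<^sup>2"
    using D by (intro power_mono) auto
  ultimately have "\<bar>s\<^sup>2 - C\<^sup>2 - D\<^sup>2\<bar> \<le> s\<^sup>2 - D\<^sup>2"
    unfolding abs_le_iff using zero_le_power2[of C] by (simp add: algebra_simps)
  then have "(s\<^sup>2 - C\<^sup>2 - D\<^sup>2)\<^sup>2 \<le> (s\<^sup>2 - D\<^sup>2)\<^sup>2"
    using power_mono[of "\<bar>s\<^sup>2 - C\<^sup>2 - D\<^sup>2\<bar>" "s\<^sup>2 - D\<^sup>2" 2] by simp
  moreover have "16 * X = (s\<^sup>2 - C\<^sup>2 - D\<^sup>2)\<^sup>2 - 4 * C\<^sup>2 * D\<^sup>2"
    unfolding X_def C_def D_def by (simp add: eval_nat_numeral field_simps)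
  ultimately have "16 * X \<le> (s\<^sup>2 - D\<^sup>2)\<^sup>2"
    by (smt (verit) zero_le_mult_iff zero_le_power2)
  moreover have "0 \<le> X"
    unfolding X_def using assms by simp
  ultimately have "(16 * X)\<^sup>2 \<le> ((s\<^sup>2 - D\<^sup>2)\<^sup>2)\<^sup>2"
    by (intro power_mono) auto
  then have "D\<^sup>2 * (16 * X)\<^sup>2 \<le> D\<^sup>2 * ((s\<^sup>2 - D\<^sup>2)\<^sup>2)\<^sup>2"
    by (rule mult_left_mono) simp
  have "256 * (5 ^ 5 * (X * D)\<^sup>2) = 5 ^ 5 * (D\<^sup>2 * (16 * X)\<^sup>2)"
    by (simp add: power_mult_distrib)
  also have "\<dots> \<le> 5 ^ 5 * D\<^sup>2 * (s\<^sup>2 - D\<^sup>2) ^ 4"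
    using \<open>D\<^sup>2 * (16 * X)\<^sup>2 \<le> _\<close> by simp
  also have "\<dots> \<le> 4 ^ 4 * (s\<^sup>2) ^ 5"
    using D by (intro mult_diff_pow4_le) (auto intro: power_mono)
  finally have "5 ^ 5 * (X * D)\<^sup>2 \<le> s ^ 10"
    by simp
  moreover have "u * v * (v - u) * (s - u) * (s - v) = X * D"
    unfolding X_def D_def by (simp add: algebra_simps)
  ultimately show ?thesis by simp
qed

definition discr4 :: "real \<Rightarrow> real \<Rightarrow> real \<Rightarrow> real \<Rightarrow> real" where
  "discr4 a b c d = ((b - a) * (c - a) * (d - a) * (c - b) * (d - b) * (d - c))\<^sup>2"

lemma discr4_le_sorted:
  assumes "a \<le> b" "b \<le> c" "c \<le> d" and "\<bar>a\<bar> \<le> h" "\<bar>d\<bar> \<le> h"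
  shows "discr4 a b c d \<le> 2 ^ 12 / 5 ^ 5 * h ^ 12"
proof -
  define u v s where "u = b - a" and "v = c - a" and "s = d - a"
  have s: "0 \<le> s" "s \<le> 2 * h"
    using assms unfolding s_def by auto
  have diffs: "b - a = u" "c - a = v" "d - a = s" "c - b = v - u" "d - b = s - u" "d - c = s - v"
    unfolding u_def v_def s_def by simp_all
  have "5 ^ 5 * discr4 a b c d = s\<^sup>2 * (5 ^ 5 * (u * v * (v - u) * (s - u) * (s - v))\<^sup>2)"
    unfolding discr4_def diffs by (simp add: power_mult_distrib)
  also have "\<dots> \<le> s\<^sup>2 * s ^ 10"
    using assms unfolding u_def v_def s_def by (intro mult_left_mono gap_product_bound) auto
  also have "\<dots> \<le> (2 * h) ^ 12"
    using s power_mono[of s "2 * h" 12] by (simp flip: power_add)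
  finally show ?thesis
    by (simp add: power_mult_distrib field_simps)
qed

lemma discr4_swap:
  "discr4 a b c d = discr4 b a c d" "discr4 a b c d = discr4 a c b d" "discr4 a b c d = discr4 a b d c"
  unfolding discr4_def power_mult_distrib by (simp_all add: power2_commute mult_ac)

lemma wlog_sorted4:
  fixes P :: "'a :: linorder \<Rightarrow> 'a \<Rightarrow> 'a \<Rightarrow> 'a \<Rightarrow> bool"
  assumes sorted: "\<And>a b c d. a \<le> b \<Longrightarrow> b \<le> c \<Longrightarrow> c \<le> d \<Longrightarrow> P a b c d"
    and swap12: "\<And>a b c d. P a b c d \<Longrightarrow> P b a c d"
    and swap23: "\<And>a b c d. P a b c d \<Longrightarrow> P a c b d"
    and swap34: "\<And>a b c d. P a b c d \<Longrightarrow> P a b d c"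
  shows "P a b c d"
proof -
  have sorted3: "P a b c d" if "a \<le> b" "b \<le> c" for a b c d
  proof -
    consider "c \<le> d" | "b \<le> d" "d \<le> c" | "a \<le> d" "d \<le> b" | "d \<le> a"
      using linorder_le_cases by blast
    then show ?thesis
    proof cases
      case 1
      with that show ?thesis by (rule sorted)
    next
      case 2
      with that have "P a b d c" by (intro sorted)
      then show ?thesis by (rule swap34)
    next
      case 3
      with that have "P a d b c" by (intro sorted)
      then show ?thesis by (rule swap34[OF swap23])
    next
      case 4
      with that have "P d a b c" by (intro sorted)
      then show ?thesis by (rule swap34[OF swap23[OF swap12]])
    qed
  qed
  have sorted2: "P a b c d" if "a \<le> b" for a b c d
  proof -
    consider "b \<le> c" | "a \<le> c" "c \<le> b" | "c \<le> a"
      using linorder_le_cases by blast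
    then show ?thesis
    proof cases
      case 1
      with that show ?thesis by (rule sorted3)
    next
      case 2
      then have "P a c b d" by (intro sorted3)
      then show ?thesis by (rule swap23)
    next
      case 3
      with that have "P c a b d" by (intro sorted3)
      then show ?thesis by (rule swap23[OF swap12])
    qed
  qed
  show ?thesis
    using sorted2[of a b c d] sorted2[of b a c d, THEN swap12] linorder_le_cases by blast
qed

lemma discr4_le:
  assumes "\<bar>a\<bar> \<le> h" "\<bar>b\<bar> \<le> h" "\<bar>c\<bar> \<le> h" "\<bar>d\<bar> \<le> h"
  shows "discr4 a b c d \<le> 2 ^ 12 / 5 ^ 5 * h ^ 12"
proof -
  let ?P = "\<lambda>a b c d. \<bar>a\<bar> \<le> h \<longrightarrow> \<bar>b\<bar> \<le> h \<longrightarrow> \<bar>c\<bar> \<le> h \<longrightarrow> \<bar>d\<bar> \<le> h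
    \<longrightarrow> discr4 a b c d \<le> 2 ^ 12 / 5 ^ 5 * h ^ 12"
  have "?P a b c d"
  proof (rule wlog_sorted4[where P = ?P])
    fix x y z w :: real
    assume "x \<le> y" "y \<le> z" "z \<le> w"
    then show "?P x y z w"
      using discr4_le_sorted by blast
  qed (simp_all only: discr4_swap[symmetric], blast+)
  with assms show ?thesis by blast
qed

theorem proposition2p9:
  fixes \<beta> :: real
  assumes "alg_int \<beta>"
    and "degree (min_poly \<beta>) = 4"
    and "totally_real \<beta>"
  shows "field_disc \<beta> \<le> 2 ^ 12 / 5 ^ 5 * house \<beta> ^ 12"
proof -
  obtain q where q: "q \<noteq> 0" "rpoly q \<beta> = 0"
    using assms(1) by (rule alg_int_imp_rpoly_root)
  obtain r :: "nat \<Rightarrow> real" where "inj_on r {..<4}" "conjs \<beta> = (\<lambda>k. complex_of_real (r k)) ` {..<4}"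
    "\<And>x. rpoly (min_poly \<beta>) x = (\<Prod>k<4. x - r k)"
    using totally_real_min_poly_splits[OF q assms(3), unfolded assms(2)] by blast
  then interpret totally_real_field \<beta> 4 r
    using assms(1,2) by unfold_locales
  have "field_disc \<beta> \<le> det V ^ 2"
    by (rule field_disc_le)
  also have "\<dots> = discr4 (r 0) (r 1) (r 2) (r 3)"
    unfolding V_def det_vandermonde4 discr4_def ..
  also have "\<dots> \<le> 2 ^ 12 / 5 ^ 5 * house \<beta> ^ 12"
    by (intro discr4_le abs_root_le_house) auto
  finally show ?thesis .
qed

end
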